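(* Let $u\neq0$ and $v$ be parameters and let $f(x,u)=\sum_{n\ge0}u^{\binom{n}{2}}a_nx^n$ be a formal power series. Define $f_{s,t}(x\oplus_{u,v}y)=\sum_{n\ge0}a_n(x\oplus_{u,v}y)^{(n)}_{s,t}=\sum_{n\ge0}a_n\sum_{k=0}^{n}\left\{{n\atop k}\right\}_{s,t}v^{\binom{k}{2}}u^{\binom{n-k}{2}}y^kx^{n-k}$. Then, as formal power series in $x,y$, $$f_{s,t}(x\oplus_{u,v}y)=\sum_{n\ge0}v^{\binom{n}{2}}\frac{y^n}{\{n\}_{s,t}!}\,(\mathrm{T}_{u^{-1}}\mathbf{D}_{s,t})^{n}f(x,u),$$ where the operators act on the variable $x$.
   Context: Let $s,t$ be nonzero reals with $s^2+4t\neq0$, $\varphi=\frac{s+\sqrt{s^2+4t}}{2}$, $\varphi'=\frac{s-\sqrt{s^2+4t}}{2}$, $\{n\}_{s,t}=\frac{\varphi^n-\varphi'^n}{\varphi-\varphi'}$, $\{n\}_{s,t}!=\{1\}_{s,t}\cdots\{n\}_{s,t}$ ($\{0\}_{s,t}!=1$), $\left\{{n\atop k}\right\}_{s,t}=\frac{\{n\}_{s,t}!}{\{k\}_{s,t}!\{n-k\}_{s,t}!}$, and $\binom{\beta}{2}=\beta(\beta-1)/2$. The $(s,t)$-derivative acts on power series by $\mathbf{D}_{s,t}x^m=\{m\}_{s,t}x^{m-1}$ (termwise), and $\mathrm{T}_a$ is the dilation $\mathrm{T}_af(x)=f(ax)$. The deformed binomial polynomial is $(x\oplus_{u,v}y)_{s,t}^{(n)}=\sum_{k=0}^n\left\{{n\atop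 k}\right\}_{s,t}u^{\binom{n-k}{2}}v^{\binom{k}{2}}x^{n-k}y^k$. *)

theory Defs
  imports Complex_Main "HOL-Computational_Algebra.Formal_Power_Series"
begin

text \<open>(s,t)-numbers. s, t are real; the roots phi, phi' may be complex, so we compute in complex.\<close>

definition phi_st :: "real \<Rightarrow> real \<Rightarrow> complex" where
  "phi_st s t = (complex_of_real s + csqrt (complex_of_real (s^2 + 4*t))) / 2"

definition phi'_st :: "real \<Rightarrow> real \<Rightarrow> complex" where
  "phi'_st s t = (complex_of_real s - csqrt (complex_of_real (s^2 + 4*t))) / 2"

definition snum :: "real \<Rightarrow> real \<Rightarrow> nat \<Rightarrow> complex" where
  "snum s t n = (phi_st s t ^ n - phi'_st s t ^ n) / (phi_st s t - phi'_st s t)"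

definition sfact :: "real \<Rightarrow> real \<Rightarrow> nat \<Rightarrow> complex" where
  "sfact s t n = (\<Prod>i=1..n. snum s t i)"

definition sbinom :: "real \<Rightarrow> real \<Rightarrow> nat \<Rightarrow> nat \<Rightarrow> complex" where
  "sbinom s t n k = sfact s t n / (sfact s t k * sfact s t (n - k))"

definition Dst :: "real \<Rightarrow> real \<Rightarrow> complex fps \<Rightarrow> complex fps" where
  "Dst s t f = Abs_fps (\<lambda>m. snum s t (Suc m) * fps_nth f (Suc m))"

definition Tdil :: "complex \<Rightarrow> complex fps \<Rightarrow> complex fps" where
  "Tdil a f = Abs_fps (\<lambda>m. a ^ m * fps_nth f m)"

text \<open>Bivariate formal power series in x, y are represented by their coefficient
  functions: B i j is the coefficient of x^i y^j.\<close>

type_synonym bivar = "nat \<Rightarrow> nat \<Rightarrow> complex"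

text \<open>Deformed binomial polynomial (x (+)_{u,v} y)^{(n)}_{s,t} as a bivariate polynomial:
  coefficient of x^(n-k) y^k is {n choose k} u^C(n-k,2) v^C(k,2).\<close>

definition dbinom_poly :: "real \<Rightarrow> real \<Rightarrow> complex \<Rightarrow> complex \<Rightarrow> nat \<Rightarrow> bivar" where
  "dbinom_poly s t u v n = (\<lambda>i j. if i + j = n
      then sbinom s t n j * u ^ (i choose 2) * v ^ (j choose 2) else 0)"

text \<open>Formal (locally finite) sum of a family G of bivariate series in which G n has
  only monomials of total degree at least n: coefficientwise sum.\<close>

definition fsum2 :: "(nat \<Rightarrow> bivar) \<Rightarrow> bivar" where
  "fsum2 G = (\<lambda>i j. \<Sum>n\<le>i + j. G n i j)"

definition ypow_times :: "nat \<Rightarrow> complex fps \<Rightarrow> bivar" where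
  "ypow_times n g = (\<lambda>i j. if j = n then fps_nth g i else 0)"

end

theory Submission
  imports Defs
begin

text \<open>The coefficient of \<open>x^i y^j\<close> on the left is
  \<open>a(i+j) {i+j choose j} u^C(i,2) v^C(j,2)\<close>. On the right, \<open>(T_c D)^j\<close> shifts coefficients
  by \<open>j\<close> and multiplies them by \<open>{i+1}\<cdots>{i+j}\<close> and \<open>c^(j i + C(j,2))\<close>; for \<open>c = 1/u\<close> this
  power cancels against \<open>u^C(i+j,2) = u^C(i,2) u^(i j) u^C(j,2)\<close>, and
  \<open>{i+1}\<cdots>{i+j} / {j}! = {i+j choose j}\<close>.\<close>

lemma sfact_Suc: "sfact s t (Suc n) = sfact s t n * snum s t (Suc n)"
  by (simp add: sfact_def)

lemma sfact_add: "sfact s t (i + j) = sfact s t i * (\<Prod>k<j. snum s t (i + k + 1))"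
  by (induction j) (simp_all add: sfact_Suc)

lemma sfact_nonzero:
  assumes "\<forall>n\<ge>1. snum s t n \<noteq> 0"
  shows "sfact s t n \<noteq> 0"
  using assms by (simp add: sfact_def)

lemma sbinom_add_eq:
  assumes "sfact s t i \<noteq> 0"
  shows "sbinom s t (i + j) j = (\<Prod>k<j. snum s t (i + k + 1)) / sfact s t j"
  using assms by (simp add: sbinom_def sfact_add)

lemma fps_nth_Tdil_Dst_iterate:
  "fps_nth (((Tdil c \<circ> Dst s t) ^^ n) f) m
     = c ^ (n * m + (n choose 2)) * (\<Prod>k<n. snum s t (m + k + 1)) * fps_nth f (m + n)"
proof (induction n arbitrary: m)
  case 0
  then show ?case by (simp add: numeral_2_eq_2)
next
  case (Suc n)
  have choose: "Suc n choose 2 = (n choose 2) + n"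
    by (simp add: numeral_2_eq_2)
  have prod: "(\<Prod>k<Suc n. snum s t (m + k + 1)) = snum s t (Suc m) * (\<Prod>k<n. snum s t (Suc m + k + 1))"
    by (subst prod.lessThan_Suc_shift) simp
  have "fps_nth (((Tdil c \<circ> Dst s t) ^^ Suc n) f) m
      = c ^ m * snum s t (Suc m) * fps_nth (((Tdil c \<circ> Dst s t) ^^ n) f) (Suc m)"
    by (simp add: Tdil_def Dst_def)
  also have "\<dots> = c ^ (Suc n * m + (Suc n choose 2)) * (\<Prod>k<Suc n. snum s t (m + k + 1))
                     * fps_nth f (m + Suc n)"
    unfolding Suc prod choose by (simp add: power_add algebra_simps del: prod.lessThan_Suc)
  finally show ?case .
qed

lemma fps_nth_Tdil_inverse_Dst_iterate_twisted:
  assumes "u \<noteq> 0"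
  shows "fps_nth (((Tdil (inverse u) \<circ> Dst s t) ^^ n) (Abs_fps (\<lambda>m. u ^ (m choose 2) * a m))) m
     = u ^ (m choose 2) * (\<Prod>k<n. snum s t (m + k + 1)) * a (m + n)"
proof -
  have "(m + n) choose 2 = (m choose 2) + (n * m + (n choose 2))"
    by (induction n) (simp_all add: numeral_2_eq_2)
  then show ?thesis
    using assms by (simp add: fps_nth_Tdil_Dst_iterate power_add power_inverse field_simps)
qed

lemma fsum2_dbinom_poly:
  "fsum2 (\<lambda>n i j. a n * dbinom_poly s t u v n i j) i j
     = a (i + j) * sbinom s t (i + j) j * u ^ (i choose 2) * v ^ (j choose 2)"
  unfolding fsum2_def dbinom_poly_def by (simp add: if_distrib cong: if_cong)

lemma fsum2_ypow_times:
  "fsum2 (\<lambda>n i j. b n * ypow_times n (g n) i j) i j = b j * fps_nth (g j) i"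
  unfolding fsum2_def ypow_times_def by (simp add: if_distrib cong: if_cong)

theorem mainTheorem4:
  fixes s t :: real and u v :: complex and a :: "nat \<Rightarrow> complex"
  assumes "s \<noteq> 0" and "t \<noteq> 0" and "s^2 + 4*t \<noteq> 0"
    and "\<forall>n\<ge>1. snum s t n \<noteq> 0"
    and "u \<noteq> 0"
  defines "f \<equiv> Abs_fps (\<lambda>n. u ^ (n choose 2) * a n)"
  shows "fsum2 (\<lambda>n i j. a n * dbinom_poly s t u v n i j)
       = fsum2 (\<lambda>n i j. v ^ (n choose 2) / sfact s t n *
            ypow_times n (((Tdil (inverse u) \<circ> Dst s t) ^^ n) f) i j)"
proof (intro ext)
  fix i j
  have "sfact s t i \<noteq> 0" and "sfact s t j \<noteq> 0"
    using assms(4) by (simp_all add: sfact_nonzero)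
  then show "fsum2 (\<lambda>n i j. a n * dbinom_poly s t u v n i j) i j
       = fsum2 (\<lambda>n i j. v ^ (n choose 2) / sfact s t n *
            ypow_times n (((Tdil (inverse u) \<circ> Dst s t) ^^ n) f) i j) i j"
    unfolding fsum2_dbinom_poly fsum2_ypow_times f_def
      fps_nth_Tdil_inverse_Dst_iterate_twisted[OF assms(5)]
    by (simp add: sbinom_add_eq field_simps)
qed

end
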